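(* Let $t\ge 2$ be an integer and let $G_1,G_2,\dots,G_t$ be cyclically orderable graphs, each with at least two vertices, with $d(G_1)=d(G_2)=\cdots=d(G_t)$. Then any series composition $G_1\oplus G_2\oplus\cdots\oplus G_t$ is cyclically orderable.
   Context: The density of a connected graph $G$ with at least two vertices is $d(G)=\frac{|E(G)|}{|V(G)|-1}$. A cyclic base ordering (CBO) of a connected graph $G$ is a bijection $\mathcal{O}:E(G)\to\{1,\dots,|E(G)|\}$ such that for every $i\in\{1,\dots,|E(G)|\}$ the edges $\mathcal{O}^{-1}(i),\dots,\mathcal{O}^{-1}(i+|V(G)|-2)$ (indices taken cyclically modulo $|E(G)|$) induce a spanning tree of $G$; $G$ is cyclically orderable if it has a CBO. Given graphs $G$ and $H$ (vertex-disjoint) with $u\in V(G)$ and $v\in V(H)$, the series composition $G\oplus H$ is obtained from the disjoint union of $G$ and $H$ by identifying $u$ and $v$ into a single vertex. $G_1\oplus\cdots\oplus G_t$ denotes an iterated series composition $(\cdots(G_1\oplus G_2)\oplus\cdots)\oplus G_t$ with arbitrary choices of glued vertices at each step. *)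

theory Defs
  imports Complex_Main
begin

text \<open>Finite loopless multigraphs: an abstract edge set with an endpoint map.\<close>

record ('v, 'e) mgraph =
  verts :: "'v set"
  edges :: "'e set"
  ends  :: "'e \<Rightarrow> 'v set"

definition wf_graph :: "('v, 'e) mgraph \<Rightarrow> bool" where
  "wf_graph G \<longleftrightarrow> finite (verts G) \<and> finite (edges G) \<and>
     (\<forall>e\<in>edges G. ends G e \<subseteq> verts G \<and> card (ends G e) = 2)"

definition adj_in :: "('v, 'e) mgraph \<Rightarrow> 'e set \<Rightarrow> 'v \<Rightarrow> 'v \<Rightarrow> bool" where
  "adj_in G T x y \<longleftrightarrow> (\<exists>e\<in>T. ends G e = {x, y})"

definition connected_on :: "('v, 'e) mgraph \<Rightarrow> 'e set \<Rightarrow> bool" where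
  "connected_on G T \<longleftrightarrow> verts G \<noteq> {} \<and>
     (\<forall>x\<in>verts G. \<forall>y\<in>verts G. (x, y) \<in> {(a, b). adj_in G T a b}\<^sup>*)"

definition connected_graph :: "('v, 'e) mgraph \<Rightarrow> bool" where
  "connected_graph G \<longleftrightarrow> connected_on G (edges G)"

definition spanning_tree :: "('v, 'e) mgraph \<Rightarrow> 'e set \<Rightarrow> bool" where
  "spanning_tree G T \<longleftrightarrow> T \<subseteq> edges G \<and> connected_on G T \<and> card T = card (verts G) - 1"

definition density :: "('v, 'e) mgraph \<Rightarrow> real" where
  "density G = real (card (edges G)) / (real (card (verts G)) - 1)"

text \<open>Cyclic base ordering, with positions 0..m-1 (m = |E|) instead of 1..m.
  The window starting at position i consists of the edges at positions
  i, i+1, ..., i+|V|-2 taken modulo m.\<close>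
definition cbo_window :: "('v, 'e) mgraph \<Rightarrow> ('e \<Rightarrow> nat) \<Rightarrow> nat \<Rightarrow> 'e set" where
  "cbo_window G ord i = {e \<in> edges G. \<exists>j < card (verts G) - 1.
      ord e = (i + j) mod card (edges G)}"

definition is_cbo :: "('v, 'e) mgraph \<Rightarrow> ('e \<Rightarrow> nat) \<Rightarrow> bool" where
  "is_cbo G ord \<longleftrightarrow> bij_betw ord (edges G) {0..<card (edges G)} \<and>
     (\<forall>i < card (edges G). spanning_tree G (cbo_window G ord i))"

definition cyclically_orderable :: "('v, 'e) mgraph \<Rightarrow> bool" where
  "cyclically_orderable G \<longleftrightarrow> connected_graph G \<and> (\<exists>ord. is_cbo G ord)"

definition tag_graph :: "nat \<Rightarrow> ('v, 'e) mgraph \<Rightarrow> (nat \<times> 'v, nat \<times> 'e) mgraph" where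
  "tag_graph k G = \<lparr>verts = Pair k ` verts G, edges = Pair k ` edges G,
     ends = (\<lambda>p. Pair k ` ends G (snd p))\<rparr>"

definition glue :: "(nat \<times> 'v, nat \<times> 'e) mgraph \<Rightarrow> nat \<Rightarrow> ('v, 'e) mgraph \<Rightarrow> 'v \<Rightarrow> nat \<times> 'v
     \<Rightarrow> (nat \<times> 'v, nat \<times> 'e) mgraph" where
  "glue C k G v w = \<lparr>verts = verts C \<union> Pair k ` (verts G - {v}),
     edges = edges C \<union> Pair k ` edges G,
     ends = (\<lambda>p. if p \<in> edges C then ends C p
                 else (\<lambda>x. if x = v then w else (k, x)) ` ends G (snd p))\<rparr>"

text \<open>series_comp Gs k H: H is some iterated series composition
  (\<dots>(G_0 \<oplus> G_1) \<oplus> \<dots>) \<oplus> G_k, with arbitrary glued vertices at each step.\<close>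
inductive series_comp :: "(nat \<Rightarrow> ('v, 'e) mgraph) \<Rightarrow> nat \<Rightarrow> (nat \<times> 'v, nat \<times> 'e) mgraph \<Rightarrow> bool"
  for Gs where
  base: "series_comp Gs 0 (tag_graph 0 (Gs 0))"
| step: "series_comp Gs k C \<Longrightarrow> v \<in> verts (Gs (Suc k)) \<Longrightarrow> w \<in> verts C \<Longrightarrow>
          series_comp Gs (Suc k) (glue C (Suc k) (Gs (Suc k)) v w)"

end

theory Submission
  imports Defs
begin

(* The summands are glued on one at a time, so it suffices to show that gluing two cyclically
   orderable graphs C and G of equal density at one vertex yields a cyclically orderable graph,
   again of that density. Write |V(C)| - 1 = g s1 and |V(G)| - 1 = g s2 with s1, s2 coprime;
   equal density forces |E(C)| = p s1 and |E(G)| = p s2. Cut cyclic base orderings of C and G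
   into p consecutive blocks of s1 resp. s2 edges and interleave them block by block. A cyclic
   window of g (s1 + s2) = |V| - 1 consecutive positions of the interleaved order then meets E(C)
   in g s1 cyclically consecutive edges of the order of C, and E(G) in g s2 consecutive edges of
   the order of G, that is, in a spanning tree of each; and spanning trees of C and G together
   form a spanning tree of the glued graph. *)

section \<open>Blockwise interleaving of cyclic orders\<close>

lemma int_crossing_point:
  fixes f :: "int \<Rightarrow> int"
  assumes "mono f" "f lo < i" "i \<le> f hi"
  shows "\<exists>x. f (x - 1) < i \<and> i \<le> f x"
proof -
  have "lo \<le> hi"
    using assms by (metis dual_order.trans linorder_not_le monoD order.strict_iff_not)
  then have ex: "\<exists>n::nat. i \<le> f (lo + int n)"
    using assms(3) by (intro exI[of _ "nat (hi - lo)"]) simp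
  define n where "n = (LEAST n::nat. i \<le> f (lo + int n))"
  have n: "i \<le> f (lo + int n)"
    unfolding n_def by (rule LeastI_ex[OF ex])
  then obtain n' where n': "n = Suc n'"
    using assms(2) by (cases n) auto
  have "\<not> i \<le> f (lo + int n')"
    using not_less_Least[of n' "\<lambda>n. i \<le> f (lo + int n)"] n' n_def by auto
  then show ?thesis
    using n n' by (intro exI[of _ "lo + int n"]) auto
qed

definition block_embed :: "int \<Rightarrow> int \<Rightarrow> int \<Rightarrow> int \<Rightarrow> int" where
  "block_embed s P a x = (x div s) * P + a + x mod s"

lemma block_embed_add_mult:
  "0 < s \<Longrightarrow> block_embed s P a (x + k * s) = block_embed s P a x + k * P"
  unfolding block_embed_def by (simp add: algebra_simps)

lemma block_embed_0 [simp]: "block_embed s P a 0 = a"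
  unfolding block_embed_def by simp

lemma strict_mono_block_embed:
  assumes "0 < s" "s \<le> P"
  shows "strict_mono (block_embed s P a)"
proof (rule strict_monoI)
  fix x y :: int
  assume "x < y"
  show "block_embed s P a x < block_embed s P a y"
  proof (cases "x div s = y div s")
    case True
    then have "x mod s < y mod s"
      using \<open>x < y\<close> by (metis add_less_cancel_left div_mult_mod_eq)
    then show ?thesis
      using True unfolding block_embed_def by simp
  next
    case False
    then have "x div s + 1 \<le> y div s"
      using \<open>x < y\<close> assms(1) zdiv_mono1[of x y s] by simp
    then have "(x div s + 1) * P \<le> (y div s) * P"
      using assms by (intro mult_right_mono) auto
    moreover have "x mod s < s" "0 \<le> y mod s"
      using assms by auto
    ultimately show ?thesis
      using assms unfolding block_embed_def distrib_right by linarith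
  qed
qed

lemma block_embed_mod:
  assumes "0 < s" "0 \<le> a" "a + s \<le> P"
  shows "block_embed s P a x mod P = a + x mod s"
proof -
  have "0 \<le> a + x mod s" "a + x mod s < P"
    using assms pos_mod_bound[of s x] pos_mod_sign[of s x] by linarith+
  then show ?thesis
    unfolding block_embed_def by (simp add: add.assoc)
qed

lemma block_embed_bounds:
  assumes "0 < s" "0 \<le> a" "a + s \<le> P" "0 \<le> x" "x < p * s"
  shows "0 \<le> block_embed s P a x" "block_embed s P a x < p * P"
proof -
  show "0 \<le> block_embed s P a x"
    using assms unfolding block_embed_def by (simp add: pos_imp_zdiv_nonneg_iff)
  have "block_embed s P a x \<le> block_embed s P a (-1 + p * s)"
    using strict_mono_block_embed[of s P a] assms by (simp add: strict_mono_less_eq)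
  also have "\<dots> = block_embed s P a (-1) + p * P"
    using assms(1) by (rule block_embed_add_mult)
  also have "\<dots> = p * P + a + s - 1 - P"
    using assms by (simp add: block_embed_def div_eq_minus1 zmod_minus1)
  finally show "block_embed s P a x < p * P"
    using assms by simp
qed

lemma block_embed_crossing:
  assumes "0 < s" "s \<le> P"
  shows "\<exists>j. block_embed s P a (j - 1) < i \<and> i \<le> block_embed s P a j"
proof (rule int_crossing_point)
  show "mono (block_embed s P a)"
    using strict_mono_block_embed[OF assms] by (rule strict_mono_mono)
  have "\<bar>i\<bar> + \<bar>a\<bar> + 1 \<le> (\<bar>i\<bar> + \<bar>a\<bar> + 1) * P"
    using assms by simp
  moreover have "block_embed s P a (- (\<bar>i\<bar> + \<bar>a\<bar> + 1) * s) = a - (\<bar>i\<bar> + \<bar>a\<bar> + 1) * P"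
    using block_embed_add_mult[OF assms(1), of P a 0 "- (\<bar>i\<bar> + \<bar>a\<bar> + 1)"] by (simp add: algebra_simps)
  ultimately show "block_embed s P a (- (\<bar>i\<bar> + \<bar>a\<bar> + 1) * s) < i"
    by linarith
  have "\<bar>i\<bar> + \<bar>a\<bar> \<le> (\<bar>i\<bar> + \<bar>a\<bar>) * P"
    using mult_left_mono[of 1 P "\<bar>i\<bar> + \<bar>a\<bar>"] assms by simp
  then show "i \<le> block_embed s P a ((\<bar>i\<bar> + \<bar>a\<bar>) * s)"
    using block_embed_add_mult[OF assms(1), of P a 0] by simp
qed

lemma block_embed_window_preimage:
  assumes "0 < s" "s \<le> P" "0 < p"
  shows "\<exists>j. \<forall>x. (block_embed s P a x - i) mod (p * P) < g * P \<longleftrightarrow> (x - j) mod (p * s) < g * s"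
proof -
  let ?F = "block_embed s P a"
  have mono: "?F x \<le> ?F y \<longleftrightarrow> x \<le> y" for x y
    using strict_mono_block_embed[OF assms(1,2)] by (rule strict_mono_less_eq)
  have shift: "?F (x + k * s) = ?F x + k * P" for x k
    using assms(1) by (rule block_embed_add_mult)
  obtain j where below: "?F (j - 1) < i" and above: "i \<le> ?F j"
    using block_embed_crossing[OF assms(1,2)] by blast
  have "(?F x - i) mod (p * P) < g * P \<longleftrightarrow> (x - j) mod (p * s) < g * s" for x
  proof -
    define y where "y = (x - j) mod (p * s)"
    have y: "0 \<le> y" "y < p * s"
      unfolding y_def using assms by simp_all
    have "x = (j + y) + ((x - j) div (p * s) * p) * s"
      unfolding y_def using div_mult_mod_eq[of "x - j" "p * s"] by (simp add: algebra_simps)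
    then have Fx: "?F x = ?F (j + y) + ((x - j) div (p * s)) * (p * P)"
      by (metis shift mult.assoc)
    have "i \<le> ?F (j + y)"
      using above y mono[of j "j + y"] by simp
    moreover have "?F (j + y) < i + p * P"
      using below y mono[of "j + y" "j - 1 + p * s"] shift[of "j - 1" p] by simp
    moreover have "(?F x - i) mod (p * P) = (?F (j + y) - i) mod (p * P)"
      unfolding Fx by (simp add: diff_add_eq[symmetric])
    ultimately have "(?F x - i) mod (p * P) = ?F (j + y) - i"
      by (simp add: mod_pos_pos_trivial)
    moreover have "?F (j + y) - i < g * P \<longleftrightarrow> y < g * s"
    proof
      assume "?F (j + y) - i < g * P"
      then have "?F (j + y) < ?F (j + g * s)"
        using above shift[of j g] by simp
      then show "y < g * s"
        using mono[of "j + g * s" "j + y"] by simp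
    next
      assume "y < g * s"
      then have "?F (j + y) \<le> ?F (j - 1 + g * s)"
        using mono by simp
      then show "?F (j + y) - i < g * P"
        using below shift[of "j - 1" g] by simp
    qed
    ultimately show ?thesis
      unfolding y_def by simp
  qed
  then show ?thesis by blast
qed

lemma common_block_decomposition:
  fixes m1 m2 r1 r2 :: nat
  assumes "0 < r1" "0 < r2" "m1 * r2 = m2 * r1"
  obtains g s1 s2 p where "0 < s1" "0 < s2"
    and "r1 = g * s1" "r2 = g * s2" "m1 = p * s1" "m2 = p * s2"
proof -
  define g where "g = gcd r1 r2"
  define s1 where "s1 = r1 div g"
  define s2 where "s2 = r2 div g"
  have r: "r1 = g * s1" "r2 = g * s2"
    unfolding s1_def s2_def g_def by simp_all
  have s: "0 < s1" "0 < s2"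
    using assms(1,2) r by (auto intro: gr0I)
  have "coprime s1 s2"
    unfolding s1_def s2_def g_def using assms(1) by (intro div_gcd_coprime) auto
  moreover have "m1 * s2 = m2 * s1"
    using assms(3) r assms(1) by (simp add: ac_simps)
  ultimately have "s1 dvd m1"
    by (metis coprime_commute coprime_dvd_mult_left_iff dvd_triv_right)
  then obtain p where m1: "m1 = p * s1"
    by (metis dvd_div_mult_self)
  with \<open>m1 * s2 = m2 * s1\<close> s have "m2 = p * s2"
    by (simp add: ac_simps)
  with that s r m1 show ?thesis
    by blast
qed

definition cyclic_window :: "('e \<Rightarrow> nat) \<Rightarrow> 'e set \<Rightarrow> nat \<Rightarrow> nat \<Rightarrow> nat \<Rightarrow> 'e set" where
  "cyclic_window ord E m L i = {e \<in> E. \<exists>j<L. ord e = (i + j) mod m}"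

lemma cbo_window_eq_cyclic_window:
  "cbo_window G ord i = cyclic_window ord (edges G) (card (edges G)) (card (verts G) - 1) i"
  unfolding cbo_window_def cyclic_window_def by simp

lemma cyclic_window_subset: "cyclic_window ord E m L i \<subseteq> E"
  unfolding cyclic_window_def by auto

lemma cyclic_window_image_Pair:
  "cyclic_window (ord \<circ> snd) (Pair k ` E) m L i = Pair k ` cyclic_window ord E m L i"
  unfolding cyclic_window_def by (auto simp: image_iff)

lemma ex_add_mod_eq_iff:
  assumes "0 < m" "x < m"
  shows "(\<exists>j<L. x = (i + j) mod m) \<longleftrightarrow> (int x - int i) mod int m < int L"
proof
  assume "\<exists>j<L. x = (i + j) mod m"
  then obtain j where j: "j < L" "x = (i + j) mod m"
    by blast
  then have "(int x - int i) mod int m = int j mod int m"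
    by (simp add: zmod_int mod_diff_left_eq)
  also have "\<dots> \<le> int j"
    using assms by (simp add: zmod_le_nonneg_dividend)
  finally show "(int x - int i) mod int m < int L"
    using j by simp
next
  assume less: "(int x - int i) mod int m < int L"
  define j where "j = nat ((int x - int i) mod int m)"
  have j: "int j = (int x - int i) mod int m"
    unfolding j_def using assms by simp
  have "int ((i + j) mod m) = (int i + (int x - int i)) mod int m"
    using j by (simp add: zmod_int mod_add_right_eq)
  then have "x = (i + j) mod m"
    using assms by simp
  moreover have "j < L"
    using less j by simp
  ultimately show "\<exists>j<L. x = (i + j) mod m"
    by blast
qed

lemma mem_cyclic_window_iff:
  assumes "0 < m" "ord e < m"
  shows "e \<in> cyclic_window ord E m L i \<longleftrightarrow> e \<in> E \<and> (int (ord e) - int i) mod int m < int L"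
  using ex_add_mod_eq_iff[OF assms] unfolding cyclic_window_def by blast

lemma cyclic_window_block_embed:
  fixes f ord :: "'e \<Rightarrow> nat" and s P p g :: nat
  assumes "0 < s" "s \<le> P" "0 < p" "E' \<subseteq> E"
    and f_less: "\<And>e. e \<in> E \<Longrightarrow> f e < p * P"
    and ord_less: "\<And>e. e \<in> E' \<Longrightarrow> ord e < p * s"
    and embed: "\<And>e. e \<in> E' \<Longrightarrow> int (f e) = block_embed (int s) (int P) a (int (ord e))"
  shows "\<exists>j < p * s. cyclic_window f E (p * P) (g * P) i \<inter> E' = cyclic_window ord E' (p * s) (g * s) j"
proof -
  obtain j0 where j0: "\<And>x. (block_embed (int s) (int P) a x - int i) mod (int p * int P) < int g * int P
      \<longleftrightarrow> (x - j0) mod (int p * int s) < int g * int s"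
    using block_embed_window_preimage[of "int s" "int P" "int p" a "int i" "int g"] assms(1-3) by auto
  define j where "j = nat (j0 mod int (p * s))"
  have ps: "0 < p * s" "0 < p * P"
    using assms(1-3) by simp_all
  have j: "int j = j0 mod int (p * s)" "j < p * s"
    unfolding j_def using ps by (simp_all add: nat_less_iff)
  have "e \<in> cyclic_window f E (p * P) (g * P) i \<longleftrightarrow> e \<in> cyclic_window ord E' (p * s) (g * s) j"
    if "e \<in> E'" for e
  proof -
    have "(int (f e) - int i) mod int (p * P) < int (g * P)
        \<longleftrightarrow> (int (ord e) - j0) mod int (p * s) < int (g * s)"
      using j0 embed[OF that] by simp
    also have "\<dots> \<longleftrightarrow> (int (ord e) - int j) mod int (p * s) < int (g * s)"
      unfolding j(1) by (simp add: mod_diff_right_eq)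
    finally show ?thesis
      using that assms(4) f_less ord_less ps
      by (auto simp: mem_cyclic_window_iff[where ord = f] mem_cyclic_window_iff[where ord = ord])
  qed
  then have "cyclic_window f E (p * P) (g * P) i \<inter> E' = cyclic_window ord E' (p * s) (g * s) j"
    using cyclic_window_subset[of ord E'] by blast
  with j(2) show ?thesis
    by blast
qed

definition windows_restrict ::
    "('e \<Rightarrow> nat) \<Rightarrow> 'e set \<Rightarrow> nat \<Rightarrow> nat \<Rightarrow> ('e \<Rightarrow> nat) \<Rightarrow> 'e set \<Rightarrow> nat \<Rightarrow> nat \<Rightarrow> bool" where
  "windows_restrict f E m L g E' m' L' \<longleftrightarrow>
     (\<forall>i < m. \<exists>j < m'. cyclic_window f E m L i \<inter> E' = cyclic_window g E' m' L' j)"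

text \<open>Block \<open>q\<close> of the interleaving consists of the positions \<open>q s1, \<dots>, q s1 + s1 - 1\<close> of \<open>o1\<close>,
  followed by the positions \<open>q s2, \<dots>, q s2 + s2 - 1\<close> of \<open>o2\<close>.\<close>
definition interleave :: "nat \<Rightarrow> nat \<Rightarrow> 'e set \<Rightarrow> ('e \<Rightarrow> nat) \<Rightarrow> ('e \<Rightarrow> nat) \<Rightarrow> 'e \<Rightarrow> nat" where
  "interleave s1 s2 E1 o1 o2 e = nat (if e \<in> E1
     then block_embed (int s1) (int (s1 + s2)) 0 (int (o1 e))
     else block_embed (int s2) (int (s1 + s2)) (int s1) (int (o2 e)))"

lemma interleave_first:
  assumes "0 < s1" "e \<in> E1" "o1 e < p * s1"
  shows "int (interleave s1 s2 E1 o1 o2 e) = block_embed (int s1) (int (s1 + s2)) 0 (int (o1 e))"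
    and "interleave s1 s2 E1 o1 o2 e < p * (s1 + s2)"
proof -
  have "int (o1 e) < int p * int s1"
    using assms(3) by (metis of_nat_less_iff of_nat_mult)
  then have "0 \<le> block_embed (int s1) (int (s1 + s2)) 0 (int (o1 e))"
    "block_embed (int s1) (int (s1 + s2)) 0 (int (o1 e)) < int (p * (s1 + s2))"
    using block_embed_bounds[of "int s1" 0 "int (s1 + s2)" "int (o1 e)" "int p"] assms(1) by simp_all
  with assms(2) show
      "int (interleave s1 s2 E1 o1 o2 e) = block_embed (int s1) (int (s1 + s2)) 0 (int (o1 e))"
      "interleave s1 s2 E1 o1 o2 e < p * (s1 + s2)"
    unfolding interleave_def by (simp_all add: nat_less_iff)
qed

lemma interleave_second:
  assumes "0 < s2" "e \<notin> E1" "o2 e < p * s2"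
  shows "int (interleave s1 s2 E1 o1 o2 e) = block_embed (int s2) (int (s1 + s2)) (int s1) (int (o2 e))"
    and "interleave s1 s2 E1 o1 o2 e < p * (s1 + s2)"
proof -
  have "int (o2 e) < int p * int s2"
    using assms(3) by (metis of_nat_less_iff of_nat_mult)
  then have "0 \<le> block_embed (int s2) (int (s1 + s2)) (int s1) (int (o2 e))"
    "block_embed (int s2) (int (s1 + s2)) (int s1) (int (o2 e)) < int (p * (s1 + s2))"
    using block_embed_bounds[of "int s2" "int s1" "int (s1 + s2)" "int (o2 e)" "int p"] assms(1)
    by simp_all
  with assms(2) show
      "int (interleave s1 s2 E1 o1 o2 e) = block_embed (int s2) (int (s1 + s2)) (int s1) (int (o2 e))"
      "interleave s1 s2 E1 o1 o2 e < p * (s1 + s2)"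
    unfolding interleave_def by (simp_all add: nat_less_iff)
qed

lemma inj_on_interleave:
  assumes disj: "E1 \<inter> E2 = {}" and s: "0 < s1" "0 < s2"
    and o1: "bij_betw o1 E1 {0..<p * s1}" and o2: "bij_betw o2 E2 {0..<p * s2}"
  shows "inj_on (interleave s1 s2 E1 o1 o2) (E1 \<union> E2)"
proof (rule inj_onI)
  let ?f = "interleave s1 s2 E1 o1 o2" and ?P = "int (s1 + s2)"
  fix x y
  assume x: "x \<in> E1 \<union> E2" and y: "y \<in> E1 \<union> E2" and eq: "?f x = ?f y"
  have f1: "int (?f e) = block_embed (int s1) ?P 0 (int (o1 e))" if "e \<in> E1" for e
    using bij_betwE[OF o1] that interleave_first[of s1 e E1 o1 p s2 o2, OF s(1) that] by simp
  have f2: "int (?f e) = block_embed (int s2) ?P (int s1) (int (o2 e))" if "e \<in> E2" for e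
    using bij_betwE[OF o2] disj that interleave_second[of s2 e E1 o2 p s1 o1, OF s(2)] by auto
  have f1_mod: "int (?f e) mod ?P < int s1" if "e \<in> E1" for e
    using that f1 block_embed_mod[of "int s1" 0 ?P] s by auto
  have f2_mod: "int s1 \<le> int (?f e) mod ?P" if "e \<in> E2" for e
    using that f2 block_embed_mod[of "int s2" "int s1" ?P] s by auto
  have strict: "strict_mono (block_embed (int s1) ?P 0)" "strict_mono (block_embed (int s2) ?P (int s1))"
    using s by (simp_all add: strict_mono_block_embed)
  consider "x \<in> E1" "y \<in> E1" | "x \<in> E2" "y \<in> E2" | "x \<in> E1" "y \<in> E2" | "x \<in> E2" "y \<in> E1"
    using x y by blast
  then show "x = y"
  proof cases
    case 1
    then have "o1 x = o1 y"
      using eq f1 strict_mono_eq[OF strict(1)] by (metis of_nat_eq_iff)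
    then show ?thesis
      using o1 1 by (auto simp: bij_betw_def inj_on_def)
  next
    case 2
    then have "o2 x = o2 y"
      using eq f2 strict_mono_eq[OF strict(2)] by (metis of_nat_eq_iff)
    then show ?thesis
      using o2 2 by (auto simp: bij_betw_def inj_on_def)
  qed (use eq f1_mod f2_mod in \<open>metis not_le\<close>)+
qed

lemma bij_betw_interleave:
  assumes disj: "E1 \<inter> E2 = {}" and s: "0 < s1" "0 < s2"
    and o1: "bij_betw o1 E1 {0..<p * s1}" and o2: "bij_betw o2 E2 {0..<p * s2}"
  shows "bij_betw (interleave s1 s2 E1 o1 o2) (E1 \<union> E2) {0..<p * (s1 + s2)}"
proof -
  have "interleave s1 s2 E1 o1 o2 e < p * (s1 + s2)" if "e \<in> E1 \<union> E2" for e
    using that bij_betwE[OF o1] bij_betwE[OF o2] disj interleave_first[of s1 e E1 o1 p s2 o2, OF s(1)]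
      interleave_second[of s2 e E1 o2 p s1 o1, OF s(2)]
    by auto
  moreover have "card (E1 \<union> E2) = p * (s1 + s2)"
    using o1 o2 disj by (simp add: card_Un_disjoint bij_betw_finite bij_betw_same_card algebra_simps)
  ultimately show ?thesis
    using inj_on_interleave[OF assms]
    by (simp add: bij_betw_def card_image card_subset_eq image_subset_iff)
qed

lemma windows_restrict_interleave:
  assumes "E1 \<inter> E2 = {}" and s: "0 < s1" "0 < s2"
    and o1: "\<And>e. e \<in> E1 \<Longrightarrow> o1 e < p * s1" and o2: "\<And>e. e \<in> E2 \<Longrightarrow> o2 e < p * s2"
  shows "windows_restrict (interleave s1 s2 E1 o1 o2) (E1 \<union> E2) (p * (s1 + s2)) (g * (s1 + s2))
      o1 E1 (p * s1) (g * s1)"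
    and "windows_restrict (interleave s1 s2 E1 o1 o2) (E1 \<union> E2) (p * (s1 + s2)) (g * (s1 + s2))
      o2 E2 (p * s2) (g * s2)"
proof -
  let ?f = "interleave s1 s2 E1 o1 o2"
  have f1: "int (?f e) = block_embed (int s1) (int (s1 + s2)) 0 (int (o1 e))" "?f e < p * (s1 + s2)"
    if "e \<in> E1" for e
    using interleave_first[of s1 e E1 o1 p s2 o2, OF s(1) that o1[OF that]] by simp_all
  have "e \<notin> E1" if "e \<in> E2" for e
    using that assms(1) by blast
  then have f2: "int (?f e) = block_embed (int s2) (int (s1 + s2)) (int s1) (int (o2 e))"
    "?f e < p * (s1 + s2)" if "e \<in> E2" for e
    using interleave_second[of s2 e E1 o2 p s1 o1, OF s(2) _ o2[OF that]] that by simp_all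
  have p_pos: "0 < p" if "i < p * (s1 + s2)" for i
    using that by (auto intro: gr0I)
  show "windows_restrict ?f (E1 \<union> E2) (p * (s1 + s2)) (g * (s1 + s2)) o1 E1 (p * s1) (g * s1)"
    unfolding windows_restrict_def
    by (intro allI impI cyclic_window_block_embed[where a = 0])
      (use s p_pos f1 f2 o1 in auto)
  show "windows_restrict ?f (E1 \<union> E2) (p * (s1 + s2)) (g * (s1 + s2)) o2 E2 (p * s2) (g * s2)"
    unfolding windows_restrict_def
    by (intro allI impI cyclic_window_block_embed[where a = "int s1"])
      (use s p_pos f1 f2 o2 in auto)
qed

lemma interleave_cyclic_orders:
  fixes o1 o2 :: "'e \<Rightarrow> nat"
  assumes disj: "E1 \<inter> E2 = {}"
    and o1: "bij_betw o1 E1 {0..<m1}" and o2: "bij_betw o2 E2 {0..<m2}"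
    and "0 < r1" "0 < r2" "m1 * r2 = m2 * r1"
  shows "\<exists>f. bij_betw f (E1 \<union> E2) {0..<m1 + m2} \<and>
    windows_restrict f (E1 \<union> E2) (m1 + m2) (r1 + r2) o1 E1 m1 r1 \<and>
    windows_restrict f (E1 \<union> E2) (m1 + m2) (r1 + r2) o2 E2 m2 r2"
proof -
  obtain g s1 s2 p where s: "0 < s1" "0 < s2"
    and r: "r1 = g * s1" "r2 = g * s2" and m: "m1 = p * s1" "m2 = p * s2"
    using assms(4-6) by (rule common_block_decomposition)
  have sums: "m1 + m2 = p * (s1 + s2)" "r1 + r2 = g * (s1 + s2)"
    unfolding m r by (simp_all add: algebra_simps)
  have "o1 e < p * s1" if "e \<in> E1" for e
    using o1 that m by (auto simp: bij_betw_def)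
  moreover have "o2 e < p * s2" if "e \<in> E2" for e
    using o2 that m by (auto simp: bij_betw_def)
  ultimately show ?thesis
    using bij_betw_interleave[OF disj s] windows_restrict_interleave[OF disj s] o1 o2
    unfolding sums unfolding m r by blast
qed

section \<open>Tagged copies and one-vertex gluing\<close>

lemma tag_graph_simps:
  "verts (tag_graph k G) = Pair k ` verts G"
  "edges (tag_graph k G) = Pair k ` edges G"
  "ends (tag_graph k G) p = Pair k ` ends G (snd p)"
  by (simp_all add: tag_graph_def)

lemma glue_simps:
  "verts (glue C k G v w) = verts C \<union> Pair k ` (verts G - {v})"
  "edges (glue C k G v w) = edges C \<union> Pair k ` edges G"
  "ends (glue C k G v w) p = (if p \<in> edges C then ends C p
     else (\<lambda>x. if x = v then w else (k, x)) ` ends G (snd p))"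
  by (simp_all add: glue_def)

lemma connected_on_reach_image:
  assumes "connected_on G T" "x \<in> verts G" "y \<in> verts G"
    and hom: "\<And>a b. adj_in G T a b \<Longrightarrow> adj_in H T' (h a) (h b)"
  shows "(h x, h y) \<in> {(a, b). adj_in H T' a b}\<^sup>*"
proof -
  have "(x, y) \<in> {(a, b). adj_in G T a b}\<^sup>*"
    using assms(1-3) unfolding connected_on_def by blast
  then show ?thesis
  proof (induction rule: rtrancl_induct)
    case (step y z)
    then show ?case
      using hom by (simp add: rtrancl_into_rtrancl)
  qed simp
qed

lemma connected_on_mono:
  assumes "connected_on G T" "T \<subseteq> T'"
  shows "connected_on G T'"
proof -
  have "{(a, b). adj_in G T a b}\<^sup>* \<subseteq> {(a, b). adj_in G T' a b}\<^sup>*"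
    using assms(2) by (intro rtrancl_mono) (auto simp: adj_in_def)
  then show ?thesis
    using assms(1) unfolding connected_on_def by blast
qed

lemma connected_graph_if_cbo:
  assumes "is_cbo G ord" "0 < card (edges G)"
  shows "connected_graph G"
  using assms connected_on_mono[of G "cbo_window G ord 0" "edges G"]
  unfolding is_cbo_def spanning_tree_def connected_graph_def by blast

lemma card_edges_pos_if_connected:
  assumes "wf_graph G" "connected_graph G" "2 \<le> card (verts G)"
  shows "0 < card (edges G)"
proof -
  obtain x y where xy: "x \<in> verts G" "y \<in> verts G" "x \<noteq> y"
    using assms(3) by (metis card_2_iff' card_le_Suc_iff numeral_2_eq_2 insertCI)
  have "(x, y) \<in> {(a, b). adj_in G (edges G) a b}\<^sup>*"
    using assms(2) xy unfolding connected_graph_def connected_on_def by blast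
  then obtain z where "adj_in G (edges G) x z"
    using xy(3) by (cases rule: converse_rtranclE) auto
  then show ?thesis
    using assms(1) unfolding adj_in_def wf_graph_def by (auto simp: card_gt_0_iff)
qed

lemma card_image_Pair [simp]: "card (Pair k ` A) = card A"
  by (simp add: card_image inj_on_def)

lemma bij_betw_comp_snd_Pair:
  "bij_betw f A B \<Longrightarrow> bij_betw (f \<circ> snd) (Pair k ` A) B"
  unfolding bij_betw_def inj_on_def by (auto simp: image_image)

lemma card_edges_tag_graph [simp]: "card (edges (tag_graph k G)) = card (edges G)"
  by (simp add: tag_graph_simps)

lemma card_verts_tag_graph [simp]: "card (verts (tag_graph k G)) = card (verts G)"
  by (simp add: tag_graph_simps)

lemma wf_graph_tag_graph:
  "wf_graph G \<Longrightarrow> wf_graph (tag_graph k G)"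
  unfolding wf_graph_def tag_graph_simps by auto

lemma density_tag_graph [simp]: "density (tag_graph k G) = density G"
  by (simp add: density_def)

lemma connected_on_tag_graph:
  assumes "connected_on G T"
  shows "connected_on (tag_graph k G) (Pair k ` T)"
proof -
  have "adj_in (tag_graph k G) (Pair k ` T) (k, a) (k, b)" if "adj_in G T a b" for a b
    using that unfolding adj_in_def tag_graph_simps by force
  then show ?thesis
    using assms connected_on_reach_image[of G T _ _ "tag_graph k G" "Pair k ` T" "Pair k"]
    unfolding connected_on_def tag_graph_simps by blast
qed

lemma spanning_tree_tag_graph:
  "spanning_tree G T \<Longrightarrow> spanning_tree (tag_graph k G) (Pair k ` T)"
  unfolding spanning_tree_def
  by (auto simp: connected_on_tag_graph tag_graph_simps)

lemma cyclically_orderable_tag_graph: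
  assumes "cyclically_orderable G"
  shows "cyclically_orderable (tag_graph k G)"
proof -
  obtain ord where ord: "is_cbo G ord"
    using assms unfolding cyclically_orderable_def by blast
  have "bij_betw (ord \<circ> snd) (edges (tag_graph k G)) {0..<card (edges (tag_graph k G))}"
    using ord unfolding is_cbo_def tag_graph_simps by (simp add: bij_betw_comp_snd_Pair)
  moreover have "cbo_window (tag_graph k G) (ord \<circ> snd) i = Pair k ` cbo_window G ord i" for i
    using cyclic_window_image_Pair[of ord k]
    unfolding cbo_window_eq_cyclic_window by (simp add: tag_graph_simps)
  ultimately have "is_cbo (tag_graph k G) (ord \<circ> snd)"
    using ord unfolding is_cbo_def by (simp add: spanning_tree_tag_graph)
  moreover have "connected_graph (tag_graph k G)"
    using assms connected_on_tag_graph[of G "edges G" k]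
    unfolding cyclically_orderable_def connected_graph_def tag_graph_simps by blast
  ultimately show ?thesis
    unfolding cyclically_orderable_def by blast
qed

definition tags_below :: "nat \<Rightarrow> (nat \<times> 'v, nat \<times> 'e) mgraph \<Rightarrow> bool" where
  "tags_below k C \<longleftrightarrow> (\<forall>x\<in>verts C. fst x < k) \<and> (\<forall>e\<in>edges C. fst e < k)"

lemma card_edges_glue:
  assumes "finite (edges C)" "finite (edges G)" "tags_below k C"
  shows "card (edges (glue C k G v w)) = card (edges C) + card (edges G)"
proof -
  have "edges C \<inter> Pair k ` edges G = {}"
    using assms(3) unfolding tags_below_def by fastforce
  then show ?thesis
    using assms(1,2) by (simp add: glue_simps card_Un_disjoint)
qed

lemma card_verts_glue:
  assumes "finite (verts C)" "finite (verts G)" "tags_below k C" "v \<in> verts G"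
  shows "card (verts (glue C k G v w)) = card (verts C) + (card (verts G) - 1)"
proof -
  have "verts C \<inter> Pair k ` (verts G - {v}) = {}"
    using assms(3) unfolding tags_below_def by fastforce
  then show ?thesis
    using assms(1,2,4) by (simp add: glue_simps card_Un_disjoint)
qed

lemma wf_graph_glue:
  assumes wfC: "wf_graph C" and wfG: "wf_graph G" and "tags_below k C"
    and "v \<in> verts G" "w \<in> verts C"
  shows "wf_graph (glue C k G v w)"
proof -
  define h where "h x = (if x = v then w else (k, x))" for x
  have "fst w < k"
    using assms(3,5) unfolding tags_below_def by blast
  then have "inj h"
    unfolding h_def inj_def by auto
  have "ends (glue C k G v w) p \<subseteq> verts (glue C k G v w) \<and> card (ends (glue C k G v w) p) = 2"
    if p: "p \<in> edges (glue C k G v w)" for p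
  proof (cases "p \<in> edges C")
    case True
    then show ?thesis
      using wfC unfolding wf_graph_def by (auto simp: glue_simps)
  next
    case False
    then obtain e where e: "e \<in> edges G" "p = (k, e)"
      using p by (auto simp: glue_simps)
    then have "ends (glue C k G v w) p = h ` ends G e"
      using False by (simp add: glue_simps h_def)
    moreover have "ends G e \<subseteq> verts G" "card (ends G e) = 2"
      using e wfG unfolding wf_graph_def by auto
    moreover have "card (h ` ends G e) = card (ends G e)"
      using \<open>inj h\<close> by (simp add: card_image inj_on_subset)
    ultimately show ?thesis
      using assms(5) by (auto simp: glue_simps h_def)
  qed
  with wfC wfG show ?thesis
    unfolding wf_graph_def by (simp add: glue_simps)
qed

lemma connected_on_glue:
  assumes tags: "tags_below k C" and v: "v \<in> verts G" and w: "w \<in> verts C"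
    and conn_T1: "connected_on C T1" and conn_T2: "connected_on G T2" and T1_sub: "T1 \<subseteq> edges C"
  shows "connected_on (glue C k G v w) (T1 \<union> Pair k ` T2)"
proof -
  let ?H = "glue C k G v w" and ?T = "T1 \<union> Pair k ` T2"
  let ?R = "{(a, b). adj_in ?H ?T a b}"
  define h where "h x = (if x = v then w else (k, x))" for x
  have hom_C: "adj_in ?H ?T (id a) (id b)" if "adj_in C T1 a b" for a b
    using that T1_sub unfolding adj_in_def by (auto simp: glue_simps)
  have reach_C: "(x, w) \<in> ?R\<^sup>* \<and> (w, x) \<in> ?R\<^sup>*" if "x \<in> verts C" for x
    using connected_on_reach_image[where h = id, OF conn_T1 _ _ hom_C] that w
    by simp
  have hom_G: "adj_in ?H ?T (h a) (h b)" if adj: "adj_in G T2 a b" for a b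
  proof -
    obtain e where e: "e \<in> T2" "ends G e = {a, b}"
      using adj unfolding adj_in_def by blast
    moreover have "(k, e) \<notin> edges C"
      using tags unfolding tags_below_def by auto
    ultimately show ?thesis
      unfolding adj_in_def by (intro bexI[of _ "(k, e)"]) (auto simp: glue_simps h_def)
  qed
  have h_v: "h v = w"
    by (simp add: h_def)
  have reach_G: "(h z, w) \<in> ?R\<^sup>* \<and> (w, h z) \<in> ?R\<^sup>*" if "z \<in> verts G" for z
    using connected_on_reach_image[where h = h, OF conn_T2 that v hom_G]
      connected_on_reach_image[where h = h, OF conn_T2 v that hom_G]
    by (simp only: h_v)
  have reach_H: "(x, w) \<in> ?R\<^sup>* \<and> (w, x) \<in> ?R\<^sup>*" if x: "x \<in> verts ?H" for x
  proof -
    have "x \<in> verts C \<or> (\<exists>z \<in> verts G - {v}. x = (k, z))"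
      using x by (auto simp: glue_simps)
    moreover have "h z = (k, z)" if "z \<noteq> v" for z
      using that by (simp add: h_def)
    ultimately show ?thesis
      using reach_C reach_G by fastforce
  qed
  show ?thesis
    unfolding connected_on_def
  proof (intro conjI ballI)
    show "verts ?H \<noteq> {}"
      using w by (auto simp: glue_simps)
    fix x y
    assume "x \<in> verts ?H" "y \<in> verts ?H"
    then show "(x, y) \<in> ?R\<^sup>*"
      using reach_H by (meson rtrancl_trans)
  qed
qed

lemma spanning_tree_glue:
  assumes wfC: "wf_graph C" and wfG: "wf_graph G" and tags: "tags_below k C"
    and v: "v \<in> verts G" and w: "w \<in> verts C"
    and T1: "spanning_tree C T1" and T2: "spanning_tree G T2"
  shows "spanning_tree (glue C k G v w) (T1 \<union> Pair k ` T2)"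
proof -
  let ?H = "glue C k G v w" and ?T = "T1 \<union> Pair k ` T2"
  have T1_sub: "T1 \<subseteq> edges C" and T2_sub: "T2 \<subseteq> edges G"
    using T1 T2 unfolding spanning_tree_def by auto
  have "connected_on ?H ?T"
    using T1 T2 T1_sub connected_on_glue[OF tags v w] unfolding spanning_tree_def by blast
  moreover have "card ?T = card (verts ?H) - 1"
  proof -
    have "finite T1" "finite T2"
      using T1_sub T2_sub wfC wfG unfolding wf_graph_def by (auto intro: finite_subset)
    moreover have "T1 \<inter> Pair k ` T2 = {}"
      using T1_sub tags unfolding tags_below_def by fastforce
    moreover have "card (verts C) \<ge> 1" "card (verts G) \<ge> 1"
      using v w wfC wfG unfolding wf_graph_def by (auto simp: Suc_le_eq card_gt_0_iff)
    ultimately show ?thesis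
      using T1 T2 card_verts_glue[of C G k v w] wfC wfG tags v
      unfolding spanning_tree_def wf_graph_def by (simp add: card_Un_disjoint)
  qed
  moreover have "?T \<subseteq> edges ?H"
    using T1_sub T2_sub by (auto simp: glue_simps)
  ultimately show ?thesis
    unfolding spanning_tree_def by blast
qed

lemma density_eq_iff:
  assumes "2 \<le> card (verts G)" "2 \<le> card (verts G')"
  shows "density G = density G' \<longleftrightarrow>
    card (edges G) * (card (verts G') - 1) = card (edges G') * (card (verts G) - 1)"
proof -
  obtain n n' where n: "card (verts G) = Suc n" "card (verts G') = Suc n'" "0 < n" "0 < n'"
    using assms by (intro that[of "card (verts G) - 1" "card (verts G') - 1"]) auto
  then have "density G = density G' \<longleftrightarrow>
      real (card (edges G) * n') = real (card (edges G') * n)"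
    unfolding density_def by (simp add: frac_eq_eq)
  then show ?thesis
    using n by (simp only: of_nat_eq_iff diff_Suc_1)
qed

lemma density_glue:
  assumes "wf_graph C" "wf_graph G" "tags_below k C" "v \<in> verts G"
    and nC: "2 \<le> card (verts C)" and nG: "2 \<le> card (verts G)"
    and dens: "density C = density G"
  shows "density (glue C k G v w) = density C"
proof -
  let ?nC = "real (card (verts C)) - 1" and ?nG = "real (card (verts G)) - 1"
  have pos: "0 < ?nC" "0 < ?nG"
    using nC nG by simp_all
  have eC: "real (card (edges C)) = density C * ?nC"
    using pos by (simp add: density_def)
  have "real (card (edges G)) = density G * ?nG"
    using pos by (simp add: density_def)
  then have eG: "real (card (edges G)) = density C * ?nG"
    unfolding dens .
  have eH: "real (card (edges (glue C k G v w))) = real (card (edges C)) + real (card (edges G))"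
    using card_edges_glue[of C G k v w] assms(1-3) unfolding wf_graph_def by simp
  have vH: "real (card (verts (glue C k G v w))) - 1 = ?nC + ?nG"
    using card_verts_glue[of C G k v w] assms(1-4) nG unfolding wf_graph_def by (simp add: of_nat_diff)
  have "density (glue C k G v w) = (density C * ?nC + density C * ?nG) / (?nC + ?nG)"
    unfolding density_def[of "glue C k G v w"] eH vH eC eG ..
  also have "\<dots> = density C"
    using pos by (simp flip: distrib_left)
  finally show ?thesis .
qed

lemma is_cbo_glue:
  assumes wfC: "wf_graph C" and wfG: "wf_graph G" and tags: "tags_below k C"
    and v: "v \<in> verts G" and w: "w \<in> verts C"
    and nC: "2 \<le> card (verts C)" and nG: "2 \<le> card (verts G)"
    and oC: "is_cbo C oC" and oG: "is_cbo G oG"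
    and dens: "density C = density G"
  shows "\<exists>f. is_cbo (glue C k G v w) f"
proof -
  let ?H = "glue C k G v w"
  let ?mC = "card (edges C)" and ?mG = "card (edges G)"
  let ?rC = "card (verts C) - 1" and ?rG = "card (verts G) - 1"
  have "edges C \<inter> Pair k ` edges G = {}"
    using tags unfolding tags_below_def by fastforce
  moreover have "bij_betw oC (edges C) {0..<?mC}"
    using oC unfolding is_cbo_def by blast
  moreover have "bij_betw (oG \<circ> snd) (Pair k ` edges G) {0..<?mG}"
    using oG unfolding is_cbo_def by (simp add: bij_betw_comp_snd_Pair)
  ultimately obtain f where f: "bij_betw f (edges C \<union> Pair k ` edges G) {0..<?mC + ?mG}"
    and wC: "windows_restrict f (edges C \<union> Pair k ` edges G) (?mC + ?mG) (?rC + ?rG)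
      oC (edges C) ?mC ?rC"
    and wG: "windows_restrict f (edges C \<union> Pair k ` edges G) (?mC + ?mG) (?rC + ?rG)
      (oG \<circ> snd) (Pair k ` edges G) ?mG ?rG"
    using interleave_cyclic_orders[of "edges C" "Pair k ` edges G" oC ?mC "oG \<circ> snd" ?mG ?rC ?rG]
      nC nG dens density_eq_iff[OF nC nG] by auto
  have edges_H: "edges ?H = edges C \<union> Pair k ` edges G"
    by (simp add: glue_simps)
  have card_H: "card (edges ?H) = ?mC + ?mG" "card (verts ?H) - 1 = ?rC + ?rG"
    using card_edges_glue[of C G k v w] card_verts_glue[of C G k v w] wfC wfG tags v nC nG
    unfolding wf_graph_def by simp_all
  have "spanning_tree ?H (cbo_window ?H f i)" if i: "i < card (edges ?H)" for i
  proof -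
    obtain i1 i2 where "i1 < ?mC" "i2 < ?mG"
      and "cbo_window ?H f i \<inter> edges C = cbo_window C oC i1"
      and "cbo_window ?H f i \<inter> Pair k ` edges G = Pair k ` cbo_window G oG i2"
      using wC wG i
      unfolding windows_restrict_def cbo_window_eq_cyclic_window card_H
      unfolding edges_H cyclic_window_image_Pair
      by blast
    moreover have "cbo_window ?H f i
        = (cbo_window ?H f i \<inter> edges C) \<union> (cbo_window ?H f i \<inter> Pair k ` edges G)"
      using cyclic_window_subset[of f "edges ?H"] unfolding cbo_window_eq_cyclic_window edges_H
      by blast
    ultimately have "cbo_window ?H f i = cbo_window C oC i1 \<union> Pair k ` cbo_window G oG i2"
      by simp
    with \<open>i1 < ?mC\<close> \<open>i2 < ?mG\<close> oC oG show ?thesis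
      using spanning_tree_glue[OF wfC wfG tags v w] unfolding is_cbo_def by simp
  qed
  then have "is_cbo ?H f"
    using f unfolding is_cbo_def card_H unfolding edges_H by simp
  then show ?thesis
    by blast
qed

lemma cyclically_orderable_glue:
  assumes wfC: "wf_graph C" and wfG: "wf_graph G" and tags: "tags_below k C"
    and v: "v \<in> verts G" and w: "w \<in> verts C"
    and nC: "2 \<le> card (verts C)" and nG: "2 \<le> card (verts G)"
    and coC: "cyclically_orderable C" and coG: "cyclically_orderable G"
    and dens: "density C = density G"
  shows "cyclically_orderable (glue C k G v w)"
proof -
  obtain oC oG where "is_cbo C oC" "is_cbo G oG"
    using coC coG unfolding cyclically_orderable_def by blast
  then obtain f where "is_cbo (glue C k G v w) f"
    using is_cbo_glue[OF wfC wfG tags v w nC nG _ _ dens] by blast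
  moreover have "0 < card (edges (glue C k G v w))"
    using card_edges_pos_if_connected[OF wfC _ nC] coC card_edges_glue[OF _ _ tags] wfC wfG
    unfolding cyclically_orderable_def wf_graph_def by simp
  ultimately show ?thesis
    unfolding cyclically_orderable_def by (blast intro: connected_graph_if_cbo)
qed

section \<open>Series compositions\<close>

lemma series_comp_tags_below: "series_comp Gs k H \<Longrightarrow> tags_below (Suc k) H"
  by (induction rule: series_comp.induct)
    (auto simp: tags_below_def tag_graph_simps glue_simps)

lemma series_comp_invariant:
  assumes "series_comp Gs k H"
    and "\<And>i. i \<le> k \<Longrightarrow> wf_graph (Gs i)"
    and "\<And>i. i \<le> k \<Longrightarrow> 2 \<le> card (verts (Gs i))"
    and "\<And>i. i \<le> k \<Longrightarrow> cyclically_orderable (Gs i)"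
    and "\<And>i. i \<le> k \<Longrightarrow> density (Gs i) = density (Gs 0)"
  shows "wf_graph H \<and> 2 \<le> card (verts H) \<and> cyclically_orderable H \<and> density H = density (Gs 0)"
  using assms
proof (induction rule: series_comp.induct)
  case base
  then show ?case
    by (simp add: wf_graph_tag_graph cyclically_orderable_tag_graph)
next
  case (step k C v w)
  let ?G = "Gs (Suc k)"
  have "wf_graph C \<and> 2 \<le> card (verts C) \<and> cyclically_orderable C \<and> density C = density (Gs 0)"
    by (rule step.IH) (meson le_SucI step.prems)+
  then have C: "wf_graph C" "2 \<le> card (verts C)" "cyclically_orderable C" "density C = density (Gs 0)"
    by blast+
  have G: "wf_graph ?G" "2 \<le> card (verts ?G)" "cyclically_orderable ?G" "density C = density ?G"
    using step.prems[of "Suc k"] C(4) by simp_all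
  have tags: "tags_below (Suc k) C"
    using step.hyps(1) by (rule series_comp_tags_below)
  have "card (verts (glue C (Suc k) ?G v w)) = card (verts C) + (card (verts ?G) - 1)"
    using card_verts_glue[OF _ _ tags step.hyps(2)] C(1) G(1) unfolding wf_graph_def by simp
  then show ?case
    using wf_graph_glue[OF C(1) G(1) tags step.hyps(2,3)]
      cyclically_orderable_glue[OF C(1) G(1) tags step.hyps(2,3) C(2) G(2) C(3) G(3,4)]
      density_glue[OF C(1) G(1) tags step.hyps(2) C(2) G(2,4)] C(2,4) G(2)
    by simp
qed

theorem mainTheorem7:
  fixes Gs :: "nat \<Rightarrow> ('v, 'e) mgraph" and t :: nat and H :: "(nat \<times> 'v, nat \<times> 'e) mgraph"
  assumes "t \<ge> 2"
    and "\<And>i. i < t \<Longrightarrow> wf_graph (Gs i)"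
    and "\<And>i. i < t \<Longrightarrow> card (verts (Gs i)) \<ge> 2"
    and "\<And>i. i < t \<Longrightarrow> cyclically_orderable (Gs i)"
    and "\<And>i j. i < t \<Longrightarrow> j < t \<Longrightarrow> density (Gs i) = density (Gs j)"
    and "series_comp Gs (t - 1) H"
  shows "cyclically_orderable H"
proof -
  have below_t: "i < t" if "i \<le> t - 1" for i
    using that assms(1) by simp
  have "density (Gs i) = density (Gs 0)" if "i \<le> t - 1" for i
    using assms(5)[OF below_t[OF that] below_t[of 0]] by simp
  then show ?thesis
    using series_comp_invariant[OF assms(6) assms(2-4)[OF below_t]] by blast
qed

end
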